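(* Let $F$ and $G$ be the distribution functions of laws $P$ and $Q$ on $\mathbb R$ such that $P(\mathbb Z)=1$, $G$ is continuous and strictly increasing, and $P$ and $Q$ are both symmetric about $\frac n2$ for some $n\in\mathbb R$. Let $d:=F(\lfloor\frac n2\rfloor)-G(\lfloor\frac n2\rfloor)$. Then $n\in\mathbb Z$, $d=G(\lceil\frac n2\rceil-)-F(\lceil\frac n2\rceil-)$, and $$d=\begin{cases}G(\frac{n+1}2)-\frac12,& n\text{ odd},\\ \frac12P(\{\frac n2\}),& n\text{ even}.\end{cases}$$ Furthermore, the statement "for every $s\in\mathbb R$: $|F(s)-G(s)|<d$ if $s\ne\lfloor\frac n2\rfloor$, and $|F(s-)-G(s-)|<d$ if $s\ne\lceil\frac n2\rceil$" holds iff both of the following hold: $$F(s)-G(s)<d\ \text{ for all } s\in\mathbb Z \text{ with } s>\lfloor\tfrac n2\rfloor,\qquad G(s)-F(s-1)<d\ \text{ for all } s\in\mathbb Z\text{ with } s>\lceil\tfrac n2\rceil.$$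
   Context: $F(s-)$ denotes the left limit of $F$ at $s$. A distribution function is $F(s)=P(]-\infty,s])$. *)

theory Defs
  imports "HOL-Probability.Probability"
begin

definition distr_fun :: "real measure \<Rightarrow> real \<Rightarrow> real" where
  "distr_fun P s = measure P {..s}"

definition left_lim :: "(real \<Rightarrow> real) \<Rightarrow> real \<Rightarrow> real" where
  "left_lim F s = Lim (at_left s) F"

definition symmetric_about :: "real measure \<Rightarrow> real \<Rightarrow> bool" where
  "symmetric_about P c \<longleftrightarrow> distr P borel (\<lambda>x. 2 * c - x) = P"

end

theory Submission
  imports Defs
begin

text \<open>The reflection \<open>x \<mapsto> n - x\<close> maps \<open>\<int>\<close> onto \<open>n - \<int>\<close>; both sets carry full
  \<open>P\<close>-mass, so they meet and \<open>n\<close> is an integer. Symmetry then reads \<open>F(k) = 1 - F(n-k-1)\<close>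
  at integers and \<open>G(x) = 1 - G(n-x)\<close>, which turns \<open>d\<close> into its value at \<open>\<lceil>n/2\<rceil>\<close> and,
  by parity of \<open>n\<close>, into the two closed forms. Since \<open>F\<close> is constant on each \<open>[k, k+1)\<close> while
  \<open>G\<close> increases strictly, \<open>F - G\<close> is largest at \<open>k\<close> and \<open>G - F\<close> approaches its supremum
  at \<open>k + 1\<close>; so the bound \<open>|F - G| < d\<close> reduces to inequalities at integers, and reflection
  folds those below the centre onto those above it.\<close>

lemma (in prob_space) prob_eq_if_Int_eq_full:
  assumes "prob S = 1" "S \<in> events" "A \<in> events" "B \<in> events" "A \<inter> S = B \<inter> S"
  shows "prob A = prob B"
proof (rule measure_eq_AE)
  have "AE x in M. x \<in> S" using assms(1,2) prob_eq_1 by blast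
  then show "AE x in M. x \<in> A \<longleftrightarrow> x \<in> B"
    by eventually_elim (use assms(5) in blast)
qed (use assms in auto)

lemma (in prob_space) full_events_intersect:
  assumes "prob A = 1" "prob B = 1" "A \<in> events" "B \<in> events"
  shows "A \<inter> B \<noteq> {}"
proof -
  have "AE x in M. x \<in> A" "AE x in M. x \<in> B" using assms prob_eq_1 by blast+
  then have "AE x in M. x \<in> A \<inter> B" by eventually_elim blast
  show ?thesis
  proof
    assume "A \<inter> B = {}"
    with \<open>AE x in M. x \<in> A \<inter> B\<close> have "AE x in M. False" by simp
    then show False by simp
  qed
qed

lemma Ints_sets_borel [measurable]: "(\<int> :: real set) \<in> sets borel"
  by (simp add: borel_closed)

lemma left_lim_eventually_eq:
  assumes "eventually (\<lambda>x. f x = c) (at_left s)"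
  shows "left_lim f s = c"
  unfolding left_lim_def
  by (intro tendsto_Lim tendsto_eventually assms) simp

lemma left_lim_isCont:
  assumes "isCont f s"
  shows "left_lim f s = f s"
  unfolding left_lim_def
  by (intro tendsto_Lim filterlim_at_split[THEN iffD1, OF assms[unfolded isCont_def], THEN conjunct1])
     simp

lemma measure_symmetric_about:
  assumes "sets P = sets borel" "symmetric_about P c" "A \<in> sets borel"
  shows "measure P A = measure P ((\<lambda>x. 2 * c - x) -` A)"
proof -
  have "(\<lambda>x. 2 * c - x) \<in> P \<rightarrow>\<^sub>M borel"
    unfolding measurable_cong_sets[OF assms(1) refl] by simp
  then have "measure (distr P borel (\<lambda>x. 2 * c - x)) A = measure P ((\<lambda>x. 2 * c - x) -` A \<inter> space P)"
    using assms(3) by (rule measure_distr)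
  then show ?thesis
    using assms(2) sets_eq_imp_space_eq[OF assms(1)] unfolding symmetric_about_def by simp
qed

lemma distr_fun_symmetric_about:
  assumes "prob_space P" "sets P = sets borel" "symmetric_about P c"
  shows "distr_fun P x = 1 - measure P {..<2 * c - x}"
proof -
  interpret prob_space P by fact
  have "(\<lambda>y. 2 * c - y) -` {..x} = space P - {..<2 * c - x}"
    using sets_eq_imp_space_eq[OF assms(2)] by auto
  then show ?thesis
    unfolding distr_fun_def measure_symmetric_about[OF assms(2,3) atMost_borel]
    by (simp add: prob_compl assms(2))
qed

context
  fixes P :: "real measure"
  assumes prob: "prob_space P" and sets_P: "sets P = sets borel" and Ints_full: "measure P \<int> = 1"
begin

interpretation prob_space P by (fact prob)

lemma measure_eq_if_Int_Ints_eq: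
  "A \<in> sets borel \<Longrightarrow> B \<in> sets borel \<Longrightarrow> A \<inter> \<int> = B \<inter> \<int> \<Longrightarrow> measure P A = measure P B"
  by (rule prob_eq_if_Int_eq_full[OF Ints_full]) (auto simp: sets_P)

lemma distr_fun_Ints_floor: "distr_fun P x = distr_fun P (of_int \<lfloor>x\<rfloor>)"
  unfolding distr_fun_def
  by (rule measure_eq_if_Int_Ints_eq) (auto elim!: Ints_cases simp: le_floor_iff)

lemma measure_lessThan_Ints: "measure P {..<y} = distr_fun P (of_int (\<lceil>y\<rceil> - 1))"
proof -
  have "of_int z < y \<longleftrightarrow> of_int z \<le> (of_int (\<lceil>y\<rceil> - 1) :: real)" for z
    unfolding less_ceiling_iff[symmetric] of_int_le_iff by linarith
  then show ?thesis
    unfolding distr_fun_def by (intro measure_eq_if_Int_Ints_eq) (auto elim!: Ints_cases)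
qed

lemma left_lim_distr_fun_Ints: "left_lim (distr_fun P) s = distr_fun P (of_int (\<lceil>s\<rceil> - 1))"
proof (rule left_lim_eventually_eq)
  have "eventually (\<lambda>x. x \<in> {of_int (\<lceil>s\<rceil> - 1)<..<s}) (at_left s)"
    by (rule eventually_at_left_real) linarith
  then show "eventually (\<lambda>x. distr_fun P x = distr_fun P (of_int (\<lceil>s\<rceil> - 1))) (at_left s)"
  proof eventually_elim
    case (elim x)
    then have "\<lfloor>x\<rfloor> = \<lceil>s\<rceil> - 1" by (simp add: floor_eq_iff) linarith
    then show ?case by (subst distr_fun_Ints_floor) simp
  qed
qed

lemma distr_fun_jump_Ints: "distr_fun P (of_int k) - distr_fun P (of_int (k - 1)) = measure P {of_int k}"
proof -
  have "measure P {..of_int k} = measure P {..<of_int k} + measure P {of_int k}"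
    by (subst ivl_disj_un_singleton(2)[symmetric], rule finite_measure_Union) (auto simp: sets_P)
  then show ?thesis using measure_lessThan_Ints[of "of_int k"] by (simp add: distr_fun_def)
qed

lemma symmetric_about_Ints_center:
  assumes "symmetric_about P c"
  shows "2 * c \<in> \<int>"
proof -
  let ?R = "(\<lambda>x. 2 * c - x) -` \<int>"
  have R: "?R \<in> events"
    using measurable_sets[of "\<lambda>x. 2 * c - x" borel borel \<int>] sets_P by simp
  have "prob ?R = 1"
    using measure_symmetric_about[OF sets_P assms Ints_sets_borel] Ints_full by simp
  then obtain x where "x \<in> \<int>" "2 * c - x \<in> \<int>"
    using full_events_intersect[OF Ints_full _ _ R] sets_P by auto
  then have "2 * c - x + x \<in> \<int>" by (intro Ints_add)
  then show ?thesis by simp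
qed

lemma distr_fun_reflect_Ints:
  assumes "symmetric_about P (of_int N / 2)"
  shows "distr_fun P (of_int k) = 1 - distr_fun P (of_int (N - k - 1))"
proof -
  have "distr_fun P (of_int k) = 1 - measure P {..<of_int (N - k)}"
    using distr_fun_symmetric_about[OF prob sets_P assms] by simp
  also have "measure P {..<of_int (N - k)} = distr_fun P (of_int (N - k - 1))"
    unfolding measure_lessThan_Ints by simp
  finally show ?thesis .
qed

end

lemma measure_lessThan_continuous_distr_fun:
  assumes "prob_space Q" "sets Q = sets borel" "isCont (distr_fun Q) y"
  shows "measure Q {..<y} = distr_fun Q y"
proof -
  interpret prob_space Q by fact
  have mono: "measure Q {..<y} \<le> distr_fun Q y" "x < y \<Longrightarrow> distr_fun Q x \<le> measure Q {..<y}" for x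
    by (auto simp: distr_fun_def assms(2) intro!: finite_measure_mono)
  have "(distr_fun Q \<longlongrightarrow> distr_fun Q y) (at_left y)"
    using assms(3) by (simp add: isCont_def filterlim_at_split)
  moreover have "eventually (\<lambda>x. x \<in> {y - 1<..<y}) (at_left y)"
    by (rule eventually_at_left_real) simp
  then have "eventually (\<lambda>x. distr_fun Q x \<le> measure Q {..<y}) (at_left y)"
    by eventually_elim (simp add: mono(2))
  ultimately have "distr_fun Q y \<le> measure Q {..<y}"
    by (rule tendsto_upperbound) simp
  with mono(1) show ?thesis by simp
qed

lemma distr_fun_reflect_continuous:
  assumes "prob_space Q" "sets Q = sets borel" "symmetric_about Q c" "isCont (distr_fun Q) (2 * c - x)"
  shows "distr_fun Q x = 1 - distr_fun Q (2 * c - x)"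
  using distr_fun_symmetric_about[OF assms(1-3)] measure_lessThan_continuous_distr_fun[OF assms(1,2,4)]
  by simp

lemma floor_half_of_int: "\<lfloor>real_of_int N / 2\<rfloor> = N div 2"
  using floor_divide_of_int_eq[where 'a=real, of N 2] by simp

lemma ceiling_half_of_int: "\<lceil>real_of_int N / 2\<rceil> = - (- N div 2)"
  using ceiling_divide_eq_div[of N 2] by simp

lemma floor_half_plus_ceiling_half: "\<lfloor>real_of_int N / 2\<rfloor> + \<lceil>real_of_int N / 2\<rceil> = N"
  unfolding floor_half_of_int ceiling_half_of_int by presburger

locale symmetric_cdf_pair =
  fixes F G :: "real \<Rightarrow> real" and N :: int
  assumes F_floor: "F x = F (of_int \<lfloor>x\<rfloor>)"
    and F_reflect: "F (of_int k) = 1 - F (of_int (N - k - 1))"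
    and G_reflect: "G x = 1 - G (of_int N - x)"
    and G_strict_mono: "strict_mono G"
begin

abbreviation lo :: int where "lo \<equiv> \<lfloor>real_of_int N / 2\<rfloor>"
abbreviation hi :: int where "hi \<equiv> \<lceil>real_of_int N / 2\<rceil>"

definition gap :: real where "gap = F (of_int lo) - G (of_int lo)"

lemma G_reflect_Ints: "G (of_int k) = 1 - G (of_int (N - k))"
  using G_reflect[of "of_int k"] by simp

lemma gap_at_hi: "gap = G (of_int hi) - F (of_int (hi - 1))"
proof -
  have "N - lo = hi" using floor_half_plus_ceiling_half[of N] by simp
  then show ?thesis
    using F_reflect[of lo] G_reflect_Ints[of lo] unfolding gap_def by simp
qed

lemma gap_odd:
  assumes "odd N"
  shows "gap = G ((of_int N + 1) / 2) - 1 / 2"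
proof -
  have hi: "hi = lo + 1" and N: "N - lo - 1 = lo"
    using assms unfolding floor_half_of_int ceiling_half_of_int by presburger+
  have "real_of_int (N + 1) = of_int (2 * hi)"
    using N hi by simp
  then have hi_real: "(of_int N + 1) / 2 = (of_int hi :: real)"
    by simp
  have "F (of_int lo) = 1 / 2"
    using F_reflect[of lo] unfolding N by simp
  then show ?thesis
    unfolding hi_real gap_at_hi hi by simp
qed

lemma gap_even:
  assumes "even N"
  shows "gap = (F (of_int lo) - F (of_int (lo - 1))) / 2"
proof -
  have N: "N - lo = lo"
    using assms unfolding floor_half_of_int by presburger
  have "G (of_int lo) = 1 / 2"
    using G_reflect_Ints[of lo] unfolding N by simp
  moreover have "F (of_int lo) = 1 - F (of_int (lo - 1))"
    using F_reflect[of lo] N by (simp add: algebra_simps)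
  ultimately show ?thesis
    unfolding gap_def by simp
qed

lemma diff_reflect_Ints: "F (of_int k) - G (of_int k) = G (of_int (N - k)) - F (of_int (N - k - 1))"
  using F_reflect[of k] G_reflect_Ints[of k] by simp

lemma left_diff_reflect: "F (of_int (\<lceil>s\<rceil> - 1)) - G s = G (of_int N - s) - F (of_int N - s)"
proof -
  have "\<lfloor>of_int N - s\<rfloor> = N - \<lceil>s\<rceil>"
    using floor_add_int[of "- s" N] by (simp add: floor_minus)
  then have "F (of_int N - s) = F (of_int (N - (\<lceil>s\<rceil> - 1) - 1))"
    using F_floor[of "of_int N - s"] by simp
  then show ?thesis
    using F_reflect[of "\<lceil>s\<rceil> - 1"] G_reflect[of s] by simp
qed

context
  assumes above_lo: "\<And>k. k > lo \<Longrightarrow> F (of_int k) - G (of_int k) < gap"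
    and above_hi: "\<And>k. k > hi \<Longrightarrow> G (of_int k) - F (of_int (k - 1)) < gap"
begin

lemma left_gap_le_Ints: "G (of_int k) - F (of_int (k - 1)) \<le> gap"
proof -
  consider "k > hi" | "k = hi" | "k < hi" by linarith
  then show ?thesis
  proof cases
    case 3
    then have "N - k > lo" using floor_half_plus_ceiling_half[of N] by simp
    then show ?thesis using above_lo diff_reflect_Ints[of "N - k"] by fastforce
  qed (use above_hi[of k] gap_at_hi in simp_all)
qed

lemma right_gap_lt:
  assumes "t \<noteq> of_int lo"
  shows "F t - G t < gap"
proof -
  define k where "k = \<lfloor>t\<rfloor>"
  have "of_int k \<le> t" unfolding k_def by simp
  then have G_le: "G (of_int k) \<le> G t"
    using G_strict_mono by (simp add: strict_mono_less_eq)
  have F_eq: "F t = F (of_int k)" unfolding k_def by (rule F_floor)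
  consider "k > lo" | "k = lo" | "k < lo" by linarith
  then show ?thesis
  proof cases
    case 1
    then show ?thesis using above_lo[of k] F_eq G_le by simp
  next
    case 2
    with assms \<open>of_int k \<le> t\<close> have "G (of_int lo) < G t"
      using G_strict_mono by (simp add: strict_mono_less)
    then show ?thesis using F_eq 2 unfolding gap_def by simp
  next
    case 3
    then have "N - k > hi" using floor_half_plus_ceiling_half[of N] by simp
    then show ?thesis using above_hi[of "N - k"] diff_reflect_Ints[of k] F_eq G_le by simp
  qed
qed

lemma abs_gap_lt:
  assumes "t \<noteq> of_int lo"
  shows "\<bar>F t - G t\<bar> < gap"
proof -
  define k where "k = \<lfloor>t\<rfloor>"
  have "t < of_int (k + 1)" unfolding k_def by linarith
  then have "G t < G (of_int (k + 1))"
    using G_strict_mono by (simp add: strict_mono_less)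
  moreover have "F t = F (of_int k)" unfolding k_def by (rule F_floor)
  ultimately have "G t - F t < gap"
    using left_gap_le_Ints[of "k + 1"] by simp
  with right_gap_lt[OF assms] show ?thesis by linarith
qed

end

text \<open>Here \<open>F (of_int (\<lceil>s\<rceil> - 1))\<close> is the left limit of \<open>F\<close> at \<open>s\<close>.\<close>

lemma gap_bound_iff:
  "(\<forall>s. (s \<noteq> of_int lo \<longrightarrow> \<bar>F s - G s\<bar> < gap)
       \<and> (s \<noteq> of_int hi \<longrightarrow> \<bar>F (of_int (\<lceil>s\<rceil> - 1)) - G s\<bar> < gap))
   \<longleftrightarrow> (\<forall>k. k > lo \<longrightarrow> F (of_int k) - G (of_int k) < gap)
       \<and> (\<forall>k. k > hi \<longrightarrow> G (of_int k) - F (of_int (k - 1)) < gap)"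
    (is "?bound \<longleftrightarrow> ?above_lo \<and> ?above_hi")
proof
  assume bound: ?bound
  show "?above_lo \<and> ?above_hi"
  proof (intro conjI allI impI)
    fix k assume "k > lo"
    then show "F (of_int k) - G (of_int k) < gap"
      using bound[rule_format, of "of_int k"] by auto
  next
    fix k assume "k > hi"
    then show "G (of_int k) - F (of_int (k - 1)) < gap"
      using bound[rule_format, of "of_int k"] by auto
  qed
next
  assume "?above_lo \<and> ?above_hi"
  then have abs_gap: "\<bar>F t - G t\<bar> < gap" if "t \<noteq> of_int lo" for t
    using abs_gap_lt that by blast
  show ?bound
  proof (intro allI conjI impI)
    fix s :: real
    show "\<bar>F s - G s\<bar> < gap" if "s \<noteq> of_int lo"
      using abs_gap that .
    assume "s \<noteq> of_int hi"
    then have "of_int N - s \<noteq> of_int lo"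
      using floor_half_plus_ceiling_half[of N] by (auto simp flip: of_int_diff)
    then have "\<bar>G (of_int N - s) - F (of_int N - s)\<bar> < gap"
      using abs_gap by (simp add: abs_minus_commute)
    then show "\<bar>F (of_int (\<lceil>s\<rceil> - 1)) - G s\<bar> < gap"
      by (simp only: left_diff_reflect)
  qed
qed

end

theorem lemma1p6:
  fixes P Q :: "real measure" and F G :: "real \<Rightarrow> real" and n d :: real
  assumes P_prob: "prob_space P" and P_sets: "sets P = sets borel"
    and Q_prob: "prob_space Q" and Q_sets: "sets Q = sets borel"
    and F_def: "F = distr_fun P" and G_def: "G = distr_fun Q"
    and P_Ints: "measure P \<int> = 1"
    and G_cont: "continuous_on UNIV G" and G_mono: "strict_mono G"
    and P_symm: "symmetric_about P (n / 2)" and Q_symm: "symmetric_about Q (n / 2)"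
    and d_def: "d = F (of_int \<lfloor>n / 2\<rfloor>) - G (of_int \<lfloor>n / 2\<rfloor>)"
  shows "n \<in> \<int>
    \<and> d = left_lim G (of_int \<lceil>n / 2\<rceil>) - left_lim F (of_int \<lceil>n / 2\<rceil>)
    \<and> (odd \<lfloor>n\<rfloor> \<longrightarrow> d = G ((n + 1) / 2) - 1 / 2)
    \<and> (even \<lfloor>n\<rfloor> \<longrightarrow> d = 1 / 2 * measure P {n / 2})
    \<and> ((\<forall>s::real.
           (s \<noteq> of_int \<lfloor>n / 2\<rfloor> \<longrightarrow> \<bar>F s - G s\<bar> < d)
         \<and> (s \<noteq> of_int \<lceil>n / 2\<rceil> \<longrightarrow> \<bar>left_lim F s - left_lim G s\<bar> < d))
       \<longleftrightarrow>
       ((\<forall>s::int. s > \<lfloor>n / 2\<rfloor> \<longrightarrow> F (of_int s) - G (of_int s) < d)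
        \<and> (\<forall>s::int. s > \<lceil>n / 2\<rceil> \<longrightarrow> G (of_int s) - F (of_int (s - 1)) < d)))"
proof -
  have "2 * (n / 2) \<in> \<int>"
    by (rule symmetric_about_Ints_center[OF P_prob P_sets P_Ints P_symm])
  then obtain N where n: "n = of_int N"
    by (auto elim: Ints_cases)
  have G_isCont: "isCont G x" for x
    using G_cont by (simp add: continuous_on_eq_continuous_at)
  interpret symmetric_cdf_pair F G N
  proof
    show "F x = F (of_int \<lfloor>x\<rfloor>)" for x
      unfolding F_def by (rule distr_fun_Ints_floor[OF P_prob P_sets P_Ints])
    show "F (of_int k) = 1 - F (of_int (N - k - 1))" for k
      unfolding F_def by (rule distr_fun_reflect_Ints[OF P_prob P_sets P_Ints]) (use P_symm n in simp)
    show "G x = 1 - G (of_int N - x)" for x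
    proof -
      have "G x = 1 - G (2 * (n / 2) - x)"
        unfolding G_def by (rule distr_fun_reflect_continuous[OF Q_prob Q_sets Q_symm G_isCont[unfolded G_def]])
      then show ?thesis by (simp add: n)
    qed
  qed (fact G_mono)
  have left_lims: "left_lim F s = F (of_int (\<lceil>s\<rceil> - 1))" "left_lim G s = G s" for s
    unfolding F_def by (rule left_lim_distr_fun_Ints[OF P_prob P_sets P_Ints] left_lim_isCont[OF G_isCont])+
  have even: "gap = 1 / 2 * measure P {of_int N / 2}" if "even N"
    using gap_even[OF that] distr_fun_jump_Ints[OF P_prob P_sets P_Ints, of lo] that
    unfolding F_def floor_half_of_int by (simp add: real_of_int_div)
  have "d = gap"
    unfolding d_def gap_def n ..
  then show ?thesis
    unfolding left_lims n floor_of_int ceiling_of_int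
    using Ints_of_int gap_at_hi gap_odd even gap_bound_iff by blast
qed

end
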